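(* For every $k\ge1$, $\alpha_k(z)$ satisfies a differential equation of the form \[ \frac{d\alpha_k}{dz}=\alpha_k+k\frac{(k+1)^k}{(k+1)!}e^{(k+1)z}+e^z\sum_{m=1}^k(-1)^m f_m^{(k)}(z)\,e^{(k-m)z}, \] where $f_m^{(k)}(z)\in\mathbb Q[z]$ has degree exactly $2m$ and positive leading coefficient for $1\le m\le k-1$, and $f_k^{(k)}(z)\in\mathbb Q[z]$ has degree exactly $2k-1$ and positive leading coefficient.
   Context: For $n\ge3$, $P_n(t)=\sum_k a_{k,n}t^k\in\mathbb Z[t]$ is defined by $P_3=1$ and $P_n(t)=P_{n-1}(t)(1+t)+t\sum_{i=3}^{n-2}\binom{n-2}{i-1}P_i(t)P_{n+1-i}(t)$ for $n>3$ (so $a_{k,n}=\operatorname{rk}H^{2k}(\overline{\mathcal M}_{0,n},\mathbb Q)$). Set $\alpha_k(z)=\sum_{n\ge3}a_{k,n}\frac{z^{n-1}}{(n-1)!}$. *)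

theory Defs
  imports "HOL-Computational_Algebra.Computational_Algebra"
begin

text \<open>The polynomials P_n(t) in Z[t] (only n >= 3 is meaningful; P_n = 1 for n <= 3).\<close>
function Pn :: "nat \<Rightarrow> int poly" where
  "Pn n = (if n \<le> 3 then 1
           else Pn (n - 1) * [:1, 1:] +
                [:0, 1:] * (\<Sum>i\<in>{3..n-2}. of_nat ((n - 2) choose (i - 1)) * Pn i * Pn (n + 1 - i)))"
  by auto
termination
  by (relation "measure id") auto

definition a_coeff :: "nat \<Rightarrow> nat \<Rightarrow> int" where
  "a_coeff k n = coeff (Pn n) k"

text \<open>alpha_k(z) = sum_{n>=3} a_{k,n} z^{n-1}/(n-1)!, as a formal power series over Q:
  the coefficient of z^j is a_{k,j+1}/j! for j >= 2 and 0 otherwise.\<close>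
definition alpha :: "nat \<Rightarrow> rat fps" where
  "alpha k = Abs_fps (\<lambda>j. if 3 \<le> j + 1 then of_int (a_coeff k (j + 1)) / fact j else 0)"

end

theory Submission
  imports Defs
begin

text \<open>Read at the coefficient of t^(k+1), the recursion for P_n becomes the differential
  equation alpha_(k+1)' = alpha_(k+1) + alpha_k + sum_(a<=k) alpha_a alpha_(k-a)', with
  alpha_0 = e^z - 1 - z. By induction every alpha_a is an exponential polynomial
  sum_(j<=a+1) y_j(z) e^(jz) in which, for j >= 1, y_j has degree exactly 2(a+1-j) and leading
  sign (-1)^(a+1-j), and y_(a+1) is the constant (a+1)^(a-1)/a!. In a product of two such
  expressions degrees add and signs multiply, and the summands containing alpha_0 attain the
  bound, so the right-hand side of the equation for alpha_k' has the pattern of the theorem.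
  Solving y_j' + (j-1) y_j = r_j coefficientwise keeps the degree for j >= 2 and raises it by
  one for j = 1, which propagates the pattern; the constants y_(a+1) obey a convolution
  recursion that Abel's identity solves.\<close>

section \<open>The recursion as a differential equation\<close>

declare Pn.simps [simp del]

lemma Pn_le_3: "n \<le> 3 \<Longrightarrow> Pn n = 1"
  by (subst Pn.simps) simp

lemma Pn_rec:
  "4 \<le> n \<Longrightarrow> Pn n = Pn (n - 1) * [:1, 1:] +
     [:0, 1:] * (\<Sum>i\<in>{3..n-2}. of_nat ((n - 2) choose (i - 1)) * Pn i * Pn (n + 1 - i))"
  by (subst Pn.simps) simp

lemma coeff_Pn_0: "coeff (Pn n) 0 = 1"
proof (induction n rule: less_induct)
  case (less n)
  then show ?case
    by (cases "n \<le> 3") (simp_all add: Pn_le_3 Pn_rec)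
qed

lemma a_coeff_0: "a_coeff 0 n = 1"
  by (simp add: a_coeff_def coeff_Pn_0)

lemma a_coeff_Suc_le_3: "n \<le> 3 \<Longrightarrow> a_coeff (Suc k) n = 0"
  by (simp add: a_coeff_def Pn_le_3)

lemma a_coeff_Suc_rec:
  assumes "4 \<le> n"
  shows "a_coeff (Suc k) n = a_coeff (Suc k) (n - 1) + a_coeff k (n - 1) +
     (\<Sum>i\<in>{3..n-2}. int ((n - 2) choose (i - 1)) * (\<Sum>a\<le>k. a_coeff a i * a_coeff (k - a) (n + 1 - i)))"
proof -
  have "coeff (of_nat c * P * Q) j = of_nat c * (\<Sum>a\<le>j. coeff P a * coeff Q (j - a))"
    for c j and P Q :: "int poly"
    by (simp add: of_nat_poly coeff_mult[of P Q] mult.assoc)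
  then show ?thesis
    by (simp add: a_coeff_def Pn_rec[OF assms] coeff_sum)
qed

abbreviation a_rat :: "nat \<Rightarrow> nat \<Rightarrow> rat" where
  "a_rat k n \<equiv> of_int (a_coeff k n)"

lemma alpha_nth: "alpha k $ j = (if 2 \<le> j then a_rat k (j + 1) / fact j else 0)"
  by (simp add: alpha_def)

lemma alpha_0: "alpha 0 = fps_exp 1 - 1 - fps_X"
proof (rule fps_ext)
  fix j
  show "alpha 0 $ j = (fps_exp 1 - 1 - fps_X) $ j"
    by (cases j; cases "j - 1") (auto simp: alpha_nth a_coeff_0 algebra_simps)
qed

lemma alpha_mult_deriv_nth:
  "(alpha a * fps_deriv (alpha b)) $ Suc (Suc m) =
     (\<Sum>i=2..Suc m. of_nat (Suc (Suc m) choose i) / fact (Suc (Suc m)) *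
                     (a_rat a (Suc i) * a_rat b (m + 4 - i)))"
proof -
  let ?j = "Suc (Suc m)"
  let ?t = "\<lambda>i. alpha a $ i * (of_nat (?j - i + 1) * alpha b $ (?j - i + 1))"
  have "(alpha a * fps_deriv (alpha b)) $ ?j = (\<Sum>i=0..?j. ?t i)"
    by (simp add: fps_mult_nth)
  also have "\<dots> = (\<Sum>i=2..Suc m. ?t i)"
    by (rule sum.mono_neutral_right) (auto simp: alpha_nth)
  also have "\<dots> = (\<Sum>i=2..Suc m. of_nat (?j choose i) / fact ?j * (a_rat a (Suc i) * a_rat b (m + 4 - i)))"
  proof (rule sum.cong[OF refl])
    fix i assume "i \<in> {2..Suc m}"
    then obtain r where r: "?j = i + r" "1 \<le> r" "2 \<le> i"
      by (intro that[of "?j - i"]) auto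
    have "of_nat (?j - i + 1) * alpha b $ (?j - i + 1) = a_rat b (m + 4 - i) / fact r"
      using r by (simp add: alpha_nth del: of_nat_Suc) (simp add: eval_nat_numeral)
    moreover have "(of_nat (?j choose i) :: rat) / fact ?j = 1 / (fact i * fact r)"
      using r by (simp add: binomial_fact)
    ultimately show "?t i = of_nat (?j choose i) / fact ?j * (a_rat a (Suc i) * a_rat b (m + 4 - i))"
      using r by (simp add: alpha_nth)
  qed
  finally show ?thesis .
qed

lemma a_rat_Suc_rec:
  "a_rat (Suc k) (m + 4) = a_rat (Suc k) (m + 3) + a_rat k (m + 3) +
     (\<Sum>i=2..Suc m. of_nat (Suc (Suc m) choose i) * (\<Sum>a\<le>k. a_rat a (Suc i) * a_rat (k - a) (m + 4 - i)))"
proof -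
  have "(\<Sum>i=3..m+2. int ((m + 2) choose (i - 1)) * (\<Sum>a\<le>k. a_coeff a i * a_coeff (k - a) (m + 5 - i)))
      = (\<Sum>i=2..Suc m. int (Suc (Suc m) choose i) * (\<Sum>a\<le>k. a_coeff a (Suc i) * a_coeff (k - a) (m + 4 - i)))"
  proof -
    have "{3..m+2} = {Suc 2..Suc (Suc m)}"
      by simp
    then show ?thesis
      by (simp only: sum.shift_bounds_cl_Suc_ivl) (simp add: ac_simps)
  qed
  then show ?thesis
    using a_coeff_Suc_rec[of "m + 4" k] by (simp add: eval_nat_numeral)
qed

lemma fps_deriv_alpha_Suc:
  "fps_deriv (alpha (Suc k)) = alpha (Suc k) + alpha k + (\<Sum>a\<le>k. alpha a * fps_deriv (alpha (k - a)))"
proof (rule fps_ext)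
  fix j
  consider "j = 0" | "j = 1" | m where "j = Suc (Suc m)"
    by (metis One_nat_def not0_implies_Suc)
  then show "fps_deriv (alpha (Suc k)) $ j =
      (alpha (Suc k) + alpha k + (\<Sum>a\<le>k. alpha a * fps_deriv (alpha (k - a)))) $ j"
  proof cases
    case (3 m)
    let ?j = "Suc (Suc m)"
    have "(\<Sum>a\<le>k. alpha a * fps_deriv (alpha (k - a))) $ ?j =
        (\<Sum>i=2..Suc m. \<Sum>a\<le>k. of_nat (?j choose i) / fact ?j * (a_rat a (Suc i) * a_rat (k - a) (m + 4 - i)))"
      by (simp add: fps_sum_nth alpha_mult_deriv_nth sum.swap[of _ "{..k}"])
    also have "\<dots> = (\<Sum>i=2..Suc m. of_nat (?j choose i) *
                       (\<Sum>a\<le>k. a_rat a (Suc i) * a_rat (k - a) (m + 4 - i))) / fact ?j"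
      by (simp only: sum_divide_distrib sum_distrib_left times_divide_eq_left mult.commute)
    finally have "(\<Sum>a\<le>k. alpha a * fps_deriv (alpha (k - a))) $ ?j =
        (a_rat (Suc k) (m + 4) - a_rat (Suc k) (m + 3) - a_rat k (m + 3)) / fact ?j"
      by (simp add: a_rat_Suc_rec)
    moreover have "fps_deriv (alpha (Suc k)) $ ?j = a_rat (Suc k) (m + 4) / fact ?j"
      by (simp add: alpha_nth del: of_nat_Suc) (simp add: eval_nat_numeral)
    ultimately show ?thesis
      using 3 by (simp add: alpha_nth eval_nat_numeral diff_divide_distrib)
  qed (simp_all add: alpha_nth fps_sum_nth fps_mult_nth a_coeff_Suc_le_3)
qed

lemma minus_one_power_diff:
  assumes "k \<le> n"
  shows "(-1 :: 'a :: comm_ring_1)^(n - k) = (-1)^n * (-1)^k"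
proof -
  obtain r where n: "n = k + r"
    using assms le_iff_add by blast
  have "(-1 :: 'a)^n * (-1)^k = (-1)^k * ((-1)^r * (-1)^k)"
    by (simp only: n power_add mult.assoc)
  also have "\<dots> = (-1)^r * ((-1)^k * (-1)^k)"
    by (rule mult.left_commute)
  finally have "(-1 :: 'a)^n * (-1)^k = (-1)^r * ((-1)^k * (-1)^k)" .
  then show ?thesis
    by (simp add: n)
qed

lemma smult_sum_right: "smult c (sum f A) = (\<Sum>x\<in>A. smult c (f x))"
  by (induction A rule: infinite_finite_induct) (simp_all add: smult_add_right)

lemma pderiv_sum: "pderiv (sum f A) = (\<Sum>x\<in>A. pderiv (f x))"
  by (induction A rule: infinite_finite_induct) (simp_all add: pderiv_add)

lemma poly_eqI_pderiv:
  fixes p q :: "'a :: field_char_0 poly"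
  assumes "pderiv p = pderiv q" and "poly p x = poly q x"
  shows "p = q"
proof -
  have "degree (p - q) = 0"
    using assms(1) by (simp add: pderiv_diff flip: pderiv_eq_0_iff)
  then obtain c where "p - q = [:c:]"
    by (metis degree_eq_zeroE)
  moreover have "poly (p - q) x = 0"
    using assms(2) by simp
  ultimately show ?thesis
    by simp
qed

lemma coeff_mult_degree_le_sum:
  fixes p q :: "'a :: idom poly"
  assumes "degree p \<le> d1" "degree q \<le> d2"
  shows "coeff (p * q) (d1 + d2) = coeff p d1 * coeff q d2"
proof (cases "degree p = d1 \<and> degree q = d2")
  case True
  then show ?thesis
    using coeff_mult_degree_sum[of p q] by simp
next
  case False
  then have "degree (p * q) < d1 + d2"
    using assms degree_mult_le[of p q] by linarith
  moreover have "coeff p d1 = 0 \<or> coeff q d2 = 0"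
    using False assms by (auto simp: coeff_eq_0)
  ultimately show ?thesis
    by (auto simp: coeff_eq_0)
qed

lemma coeff_pderiv_eq_0_of_degree_le:
  fixes p :: "'a :: field_char_0 poly"
  shows "degree p \<le> d \<Longrightarrow> coeff (pderiv p) d = 0"
  by (simp add: coeff_pderiv coeff_eq_0)

lemma degree_pderiv_plus_smult_le:
  fixes p :: "'a :: field_char_0 poly"
  shows "degree p \<le> d \<Longrightarrow> degree (pderiv p + smult c p) \<le> d"
  using degree_pderiv[of p] by (auto intro!: degree_add_le)

lemma exists_pderiv_eq:
  fixes r :: "'a :: field_char_0 poly"
  shows "\<exists>q. pderiv q = r \<and> degree q \<le> Suc (degree r) \<and>
             coeff q (Suc (degree r)) = lead_coeff r / of_nat (Suc (degree r))"
proof -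
  define q where "q = (\<Sum>i\<le>degree r. monom (coeff r i / of_nat (Suc i)) (Suc i))"
  have coeff_q: "coeff q n = (case n of 0 \<Rightarrow> 0 | Suc i \<Rightarrow> coeff r i / of_nat (Suc i))" for n
    by (cases n) (auto simp: q_def coeff_sum coeff_eq_0)
  have "pderiv q = r"
    by (rule poly_eqI) (simp add: coeff_pderiv coeff_q del: of_nat_Suc)
  moreover have "degree q \<le> Suc (degree r)"
    by (rule degree_le) (auto simp: coeff_q coeff_eq_0 split: nat.split)
  ultimately show ?thesis
    by (intro exI[of _ q] conjI) (simp_all add: coeff_q del: of_nat_Suc)
qed

lemma exists_pderiv_plus_smult_eq:
  fixes r :: "'a :: field_char_0 poly"
  assumes "c \<noteq> 0"
  shows "\<exists>q. pderiv q + smult c q = r \<and> degree q \<le> degree r \<and> coeff q (degree r) = lead_coeff r / c"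
proof -
  txt \<open>The terminating Neumann series q = c^-1 sum_n (-D/c)^n r.\<close>
  define a where "a n = smult ((-1)^n / c^n) ((pderiv ^^ n) r)" for n
  define q where "q = smult (1 / c) (\<Sum>n<Suc (degree r). a n)"
  have coeff_a: "coeff (a n) j = (-1)^n / c^n * (pochhammer (of_nat (Suc j)) n * coeff r (j + n))" for n j
    by (simp add: a_def coeff_higher_pderiv)
  have "smult (1 / c) (pderiv (a n)) = - a (Suc n)" for n
    using assms by (simp add: a_def pderiv_smult)
  then have "pderiv q + smult c q = (\<Sum>n<Suc (degree r). a n - a (Suc n))"
    using assms unfolding q_def pderiv_smult pderiv_sum smult_sum_right
    by (simp add: sum_subtractf sum_negf del: lessThan_Suc)
  also have "\<dots> = r"
  proof -
    have "(pderiv ^^ Suc (degree r)) r = 0"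
      by (simp add: poly_eq_iff coeff_higher_pderiv coeff_eq_0 del: funpow.simps)
    then show ?thesis
      by (simp only: sum_lessThan_telescope') (simp add: a_def del: funpow.simps)
  qed
  finally have "pderiv q + smult c q = r" .
  moreover have "degree q \<le> degree r"
    by (rule degree_le) (simp add: q_def coeff_sum coeff_a coeff_eq_0)
  moreover have "coeff q (degree r) = lead_coeff r / c"
    by (simp add: q_def coeff_sum coeff_a coeff_eq_0 lessThan_Suc_eq_insert_0 sum.reindex)
  ultimately show ?thesis
    by blast
qed

section \<open>Abel's identity\<close>

lemma alternating_binomial_sum_Suc:
  fixes f :: "nat \<Rightarrow> 'a :: comm_ring_1"
  shows "(\<Sum>k\<le>Suc n. (-1)^k * of_nat (Suc n choose k) * f k) =
         (\<Sum>k\<le>n. (-1)^k * of_nat (n choose k) * (f k - f (Suc k)))"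
proof -
  have "(\<Sum>k\<le>Suc n. (-1)^k * of_nat (Suc n choose k) * f k) =
      f 0 + (\<Sum>k\<le>n. (-1)^Suc k * of_nat (Suc n choose Suc k) * f (Suc k))"
    by (subst sum.atMost_Suc_shift) simp
  moreover have "(\<Sum>k\<le>n. (-1)^Suc k * of_nat (Suc n choose Suc k) * f (Suc k)) =
      (\<Sum>k\<le>n. - ((-1)^k * of_nat (n choose k) * f (Suc k))) +
      (\<Sum>k\<le>n. (-1)^Suc k * of_nat (n choose Suc k) * f (Suc k))"
    by (simp add: sum.distrib[symmetric] algebra_simps)
  moreover have "(\<Sum>k\<le>n. (-1)^k * of_nat (n choose k) * f k) =
      f 0 + (\<Sum>k\<le>n. (-1)^Suc k * of_nat (n choose Suc k) * f (Suc k))"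
    using sum.atMost_Suc_shift[of "\<lambda>k. (-1)^k * of_nat (n choose k) * f k" n] by (simp add: binomial_eq_0)
  ultimately show ?thesis
    by (simp add: sum_subtractf right_diff_distrib sum_negf)
qed

lemma alternating_binomial_power_sum:
  fixes c :: "'a :: comm_ring_1"
  shows "m < n \<Longrightarrow> (\<Sum>k\<le>n. (-1)^k * of_nat (n choose k) * (of_nat k + c)^m) = 0"
proof (induction n arbitrary: m)
  case (Suc n)
  have step: "(of_nat k + c)^m - (of_nat (Suc k) + c)^m =
      - (\<Sum>i<m. of_nat (m choose i) * (of_nat k + c)^i)" for k
  proof -
    have "(of_nat (Suc k) + c)^m = ((of_nat k + c) + 1)^m"
      by (simp add: algebra_simps)
    also have "\<dots> = (\<Sum>i<m. of_nat (m choose i) * (of_nat k + c)^i) + (of_nat k + c)^m"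
      by (simp add: binomial_ring lessThan_Suc_atMost[symmetric])
    finally show ?thesis
      by simp
  qed
  have "(\<Sum>k\<le>Suc n. (-1)^k * of_nat (Suc n choose k) * (of_nat k + c)^m) =
      (\<Sum>k\<le>n. - (\<Sum>i<m. of_nat (m choose i) * ((-1)^k * of_nat (n choose k) * (of_nat k + c)^i)))"
    unfolding alternating_binomial_sum_Suc step by (simp add: sum_distrib_left algebra_simps)
  also have "\<dots> = - (\<Sum>i<m. of_nat (m choose i) *
                      (\<Sum>k\<le>n. (-1)^k * of_nat (n choose k) * (of_nat k + c)^i))"
    by (simp add: sum_negf sum_distrib_left sum.swap[of _ "{..n}"])
  also have "\<dots> = 0"
    using Suc by simp
  finally show ?case .
qed simp

text \<open>Abel's identity sum_k C(n,k) x (x+k)^(k-1) (y+n-k)^(n-k) = (x+y+n)^n at x = 1, as a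
  polynomial identity in y with a shift s. Both sides have the same derivative by induction,
  and at the root of the right-hand side the left-hand side is an n-th finite difference of
  a polynomial of degree n - 1.\<close>

definition abel_poly :: "nat \<Rightarrow> 'a :: field_char_0 \<Rightarrow> 'a poly" where
  "abel_poly n s = (\<Sum>k\<le>n. smult (of_nat (n choose k) * (of_nat k + 1)^(k - 1)) ([:s + of_nat (n - k), 1:]^(n - k)))"

lemma pderiv_abel_poly: "pderiv (abel_poly (Suc m) s) = smult (of_nat (Suc m)) (abel_poly m (s + 1))"
proof -
  have "pderiv (abel_poly (Suc m) s) = (\<Sum>k\<le>Suc m. smult (of_nat (Suc m choose k) * (of_nat k + 1)^(k - 1))
      (smult (of_nat (Suc m - k)) ([:s + of_nat (Suc m - k), 1:]^(Suc m - k - 1))))"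
    unfolding abel_poly_def pderiv_sum
    by (intro sum.cong refl) (simp only: pderiv_smult pderiv_power pderiv_pCons pderiv_singleton, simp)
  also have "\<dots> = (\<Sum>k\<le>m. smult (of_nat (Suc m choose k) * (of_nat k + 1)^(k - 1))
      (smult (of_nat (Suc m - k)) ([:s + of_nat (Suc m - k), 1:]^(Suc m - k - 1))))"
    by simp
  also have "\<dots> = (\<Sum>k\<le>m. smult (of_nat (Suc m)) (smult (of_nat (m choose k) * (of_nat k + 1)^(k - 1))
      ([:(s + 1) + of_nat (m - k), 1:]^(m - k))))"
  proof (intro sum.cong refl)
    fix k assume "k \<in> {..m}"
    then have k: "k \<le> m" by simp
    have "of_nat (Suc m choose k) * (of_nat k + 1)^(k - 1) * of_nat (Suc m - k) =
        (of_nat (Suc m - k) * of_nat (Suc m choose k)) * (of_nat k + 1 :: 'a)^(k - 1)"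
      by (simp only: ac_simps)
    also have "\<dots> = (of_nat (Suc m) * of_nat (m choose k)) * (of_nat k + 1)^(k - 1)"
      using binomial_absorb_comp[of "Suc m" k] by (metis diff_Suc_1 of_nat_mult)
    finally have "of_nat (Suc m choose k) * (of_nat k + 1)^(k - 1) * of_nat (Suc m - k) =
        of_nat (Suc m) * (of_nat (m choose k) * (of_nat k + 1 :: 'a)^(k - 1))"
      by (simp only: ac_simps)
    moreover have "s + of_nat (Suc m - k) = (s + 1) + of_nat (m - k)" "Suc m - k - 1 = m - k"
      using k by (simp_all add: Suc_diff_le)
    ultimately show "smult (of_nat (Suc m choose k) * (of_nat k + 1)^(k - 1))
        (smult (of_nat (Suc m - k)) ([:s + of_nat (Suc m - k), 1:]^(Suc m - k - 1))) =
      smult (of_nat (Suc m)) (smult (of_nat (m choose k) * (of_nat k + 1)^(k - 1))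
        ([:(s + 1) + of_nat (m - k), 1:]^(m - k)))"
      unfolding smult_smult by (simp only:)
  qed
  also have "\<dots> = smult (of_nat (Suc m)) (abel_poly m (s + 1))"
    by (simp add: abel_poly_def smult_sum_right)
  finally show ?thesis .
qed

lemma abel_poly_eq: "abel_poly n s = [:s + of_nat n + 1, 1:]^n"
proof (induction n arbitrary: s)
  case 0
  then show ?case
    by (simp add: abel_poly_def)
next
  case (Suc m)
  let ?x = "- (s + of_nat (Suc m) + 1)"
  show ?case
  proof (rule poly_eqI_pderiv[where x = ?x])
    show "pderiv (abel_poly (Suc m) s) = pderiv ([:s + of_nat (Suc m) + 1, 1:] ^ Suc m)"
    proof -
      have "pderiv ([:s + of_nat (Suc m) + 1, 1:] ^ Suc m) =
          smult (of_nat (Suc m)) ([:s + of_nat (Suc m) + 1, 1:] ^ m)"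
        by (simp only: pderiv_power_Suc pderiv_pCons pderiv_singleton) simp
      then show ?thesis
        by (simp add: pderiv_abel_poly Suc.IH algebra_simps)
    qed
    have "poly (abel_poly (Suc m) s) ?x =
        (\<Sum>k\<le>Suc m. of_nat (Suc m choose k) * (of_nat k + 1)^(k - 1) * (- (of_nat k + 1))^(Suc m - k))"
      unfolding abel_poly_def poly_sum
      by (intro sum.cong refl) (auto simp: algebra_simps)
    also have "\<dots> = (-1)^Suc m * (\<Sum>k\<le>Suc m. (-1)^k * of_nat (Suc m choose k) * (of_nat k + 1)^m)"
      unfolding sum_distrib_left
    proof (intro sum.cong refl)
      fix k assume "k \<in> {..Suc m}"
      then have k: "k \<le> Suc m" by simp
      have "(of_nat k + 1 :: 'a)^(k - 1) * (of_nat k + 1)^(Suc m - k) = (of_nat k + 1)^m"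
        using k by (cases k) (simp_all flip: power_add)
      then show "of_nat (Suc m choose k) * (of_nat k + 1)^(k - 1) * (- (of_nat k + 1))^(Suc m - k) =
          (-1)^Suc m * ((-1)^k * of_nat (Suc m choose k) * (of_nat k + 1 :: 'a)^m)"
        using k by (simp only: power_minus[of "of_nat k + 1"] minus_one_power_diff) (simp add: ac_simps)
    qed
    also have "\<dots> = 0"
      using alternating_binomial_power_sum[of m "Suc m" 1] by (simp add: add.commute)
    finally show "poly (abel_poly (Suc m) s) ?x = poly ([:s + of_nat (Suc m) + 1, 1:] ^ Suc m) ?x"
      by (simp del: power_Suc)
  qed
qed

lemma abel_identity:
  "(\<Sum>k\<le>n. of_nat (n choose k) * (of_nat k + 1)^(k - 1) * (of_nat (n - k) + 1)^(n - k)) =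
   (of_nat n + 2 :: 'a :: field_char_0)^n"
  using arg_cong[OF abel_poly_eq[of n 1], of "\<lambda>p. poly p 0"]
  by (simp add: abel_poly_def poly_sum algebra_simps)

section \<open>Exponential polynomials\<close>

text \<open>A polynomial P in a variable E over \<open>'a poly\<close> stands for the power series
  sum_j (coeff P j)(z) e^(jz), i.e. E is e^z. The derivative d/dz acts on the representation
  as \<open>pderiv\<close> on the coefficients plus E d/dE.\<close>

definition exp_poly_fps :: "'a :: field_char_0 poly poly \<Rightarrow> 'a fps" where
  "exp_poly_fps P = (\<Sum>j\<le>degree P. fps_of_poly (coeff P j) * fps_exp (of_nat j))"

definition exp_poly_deriv :: "'a :: field_char_0 poly poly \<Rightarrow> 'a poly poly" where
  "exp_poly_deriv P = map_poly pderiv P + pCons 0 (pderiv P)"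

lemma exp_poly_fps_bound:
  assumes "degree P \<le> N"
  shows "exp_poly_fps P = (\<Sum>j\<le>N. fps_of_poly (coeff P j) * fps_exp (of_nat j))"
  unfolding exp_poly_fps_def
  by (rule sum.mono_neutral_left) (use assms in \<open>auto simp: coeff_eq_0\<close>)

lemma exp_poly_fps_0 [simp]: "exp_poly_fps 0 = 0"
  by (simp add: exp_poly_fps_def)

lemma exp_poly_fps_add: "exp_poly_fps (P + Q) = exp_poly_fps P + exp_poly_fps Q"
proof -
  let ?N = "max (degree P) (degree Q)"
  have "degree (P + Q) \<le> ?N"
    by (rule degree_add_le) auto
  then show ?thesis
    by (simp add: exp_poly_fps_bound[of _ ?N] sum.distrib fps_of_poly_add distrib_right)
qed

lemma exp_poly_fps_sum: "exp_poly_fps (sum f A) = (\<Sum>x\<in>A. exp_poly_fps (f x))"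
  by (induction A rule: infinite_finite_induct) (simp_all add: exp_poly_fps_add)

lemma exp_poly_fps_smult: "exp_poly_fps (smult a Q) = fps_of_poly a * exp_poly_fps Q"
  using degree_smult_le[of a Q]
  by (simp add: exp_poly_fps_bound[of _ "degree Q"] exp_poly_fps_def sum_distrib_left
      fps_of_poly_mult mult.assoc)

lemma exp_poly_fps_pCons: "exp_poly_fps (pCons a P) = fps_of_poly a + fps_exp 1 * exp_poly_fps P"
proof -
  have "exp_poly_fps (pCons a P) =
      (\<Sum>j\<le>Suc (degree P). fps_of_poly (coeff (pCons a P) j) * fps_exp (of_nat j))"
    by (rule exp_poly_fps_bound) (simp add: degree_pCons_le)
  also have "\<dots> = fps_of_poly a + (\<Sum>j\<le>degree P. fps_of_poly (coeff P j) * fps_exp (of_nat (Suc j)))"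
    by (subst sum.atMost_Suc_shift) simp
  also have "(\<Sum>j\<le>degree P. fps_of_poly (coeff P j) * fps_exp (of_nat (Suc j))) = fps_exp 1 * exp_poly_fps P"
    unfolding exp_poly_fps_def sum_distrib_left
    by (intro sum.cong refl) (simp add: fps_exp_add_mult[symmetric] add.commute mult.left_commute)
  finally show ?thesis .
qed

lemma exp_poly_fps_mult: "exp_poly_fps (P * Q) = exp_poly_fps P * exp_poly_fps Q"
proof (induction P)
  case (pCons a P)
  have "exp_poly_fps (pCons a P * Q) = exp_poly_fps (smult a Q + pCons 0 (P * Q))"
    by simp
  also have "\<dots> = exp_poly_fps (pCons a P) * exp_poly_fps Q"
    by (simp add: exp_poly_fps_add exp_poly_fps_smult exp_poly_fps_pCons pCons.IH algebra_simps)
  finally show ?case .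
qed simp

lemma coeff_exp_poly_deriv:
  "coeff (exp_poly_deriv P) j = pderiv (coeff P j) + smult (of_nat j) (coeff P j)"
  by (cases j) (simp_all add: exp_poly_deriv_def coeff_map_poly coeff_pderiv of_nat_poly)

lemma degree_exp_poly_deriv: "degree (exp_poly_deriv P) \<le> degree P"
  by (rule degree_le) (simp add: coeff_exp_poly_deriv coeff_eq_0)

lemma fps_deriv_exp_poly_fps: "fps_deriv (exp_poly_fps P) = exp_poly_fps (exp_poly_deriv P)"
proof -
  have "fps_deriv (exp_poly_fps P) =
      (\<Sum>j\<le>degree P. fps_deriv (fps_of_poly (coeff P j) * fps_exp (of_nat j)))"
    by (simp add: exp_poly_fps_def fps_deriv_sum)
  also have "\<dots> = (\<Sum>j\<le>degree P. fps_of_poly (coeff (exp_poly_deriv P) j) * fps_exp (of_nat j))"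
    by (intro sum.cong refl)
      (simp add: coeff_exp_poly_deriv fps_of_poly_add fps_of_poly_smult fps_of_poly_pderiv algebra_simps)
  also have "\<dots> = exp_poly_fps (exp_poly_deriv P)"
    by (rule exp_poly_fps_bound[symmetric, OF degree_exp_poly_deriv])
  finally show ?thesis .
qed

lemma exp_poly_deriv_eq_self_plus_iff:
  "exp_poly_deriv Y = Y + R \<longleftrightarrow> (\<forall>j. pderiv (coeff Y j) + smult (of_nat j - 1) (coeff Y j) = coeff R j)"
  by (auto simp: poly_eq_iff coeff_exp_poly_deriv algebra_simps smult_diff_left)

lemma exp_poly_fps_nth_0:
  "degree P \<le> N \<Longrightarrow> exp_poly_fps P $ 0 = (\<Sum>j\<le>N. coeff (coeff P j) 0)"
  by (simp add: exp_poly_fps_bound fps_sum_nth)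

text \<open>The constant term of g 1 is shifted so that the series has constant term 0.\<close>

definition exp_poly_from_coeffs :: "(nat \<Rightarrow> 'a :: field_char_0 poly) \<Rightarrow> nat \<Rightarrow> 'a poly poly" where
  "exp_poly_from_coeffs g N = (\<Sum>j=1..N. monom (g j) j) - monom [:\<Sum>i=1..N. coeff (g i) 0:] 1"

lemma coeff_exp_poly_from_coeffs:
  "coeff (exp_poly_from_coeffs g N) j =
     (if j \<in> {1..N} then g j else 0) - (if j = 1 then [:\<Sum>i=1..N. coeff (g i) 0:] else 0)"
  by (simp add: exp_poly_from_coeffs_def coeff_sum)

lemma exp_poly_fps_from_coeffs_nth_0: "exp_poly_fps (exp_poly_from_coeffs g N) $ 0 = 0"
proof -
  let ?Y = "exp_poly_from_coeffs g N" and ?c = "\<Sum>i=1..N. coeff (g i) 0"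
  have "degree ?Y \<le> N"
    by (rule degree_le) (simp add: coeff_exp_poly_from_coeffs)
  then have "exp_poly_fps ?Y $ 0 = (\<Sum>j\<le>N. coeff (coeff ?Y j) 0)"
    by (rule exp_poly_fps_nth_0)
  also have "\<dots> = (\<Sum>j\<le>N. if j \<in> {1..N} then coeff (g j) 0 else 0) - (\<Sum>j\<le>N. if j = 1 then ?c else 0)"
    unfolding coeff_exp_poly_from_coeffs sum_subtractf[symmetric] by (intro sum.cong refl) simp
  also have "\<dots> = ?c - ?c"
  proof -
    have "{..N} \<inter> {1..N} = {1..N}"
      by auto
    then show ?thesis
      by (simp only: sum.inter_restrict[OF finite_atMost, symmetric]) (cases N, simp_all)
  qed
  finally show ?thesis
    by simp
qed

lemma exp_poly_fps_expand:
  assumes "coeff R 0 = 0" "degree R \<le> Suc k"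
  shows "exp_poly_fps R = fps_of_poly (coeff R (Suc k)) * fps_exp (of_nat (Suc k)) +
     fps_exp 1 * (\<Sum>m=1..k. fps_of_poly (coeff R (k + 1 - m)) * fps_exp (of_nat (k - m)))"
proof -
  define G where "G j = fps_of_poly (coeff R j) * fps_exp (of_nat j)" for j
  have "exp_poly_fps R = (\<Sum>j\<le>Suc k. G j)"
    unfolding G_def by (rule exp_poly_fps_bound[OF assms(2)])
  also have "\<dots> = (\<Sum>j=1..k. G j) + G (Suc k)"
    using assms(1) by (simp add: G_def atMost_atLeast0 sum.atLeast_Suc_atMost)
  also have "(\<Sum>j=1..k. G j) = (\<Sum>m=1..k. G (k + 1 - m))"
    by (rule sum.reindex_bij_witness[where i = "\<lambda>j. k + 1 - j" and j = "\<lambda>m. k + 1 - m"]) auto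
  also have "\<dots> = fps_exp 1 * (\<Sum>m=1..k. fps_of_poly (coeff R (k + 1 - m)) * fps_exp (of_nat (k - m)))"
    unfolding sum_distrib_left G_def
    by (intro sum.cong refl) (auto simp: fps_exp_add_mult[symmetric] of_nat_diff ac_simps)
  finally show ?thesis
    by (simp add: G_def add.commute)
qed

lemma minus_one_power_mult_fps_of_poly_smult:
  "(-1)^m * fps_of_poly (smult ((-1)^m) p) = (fps_of_poly p :: 'a :: field_char_0 fps)"
  by (simp add: fps_of_poly_smult fps_const_power[symmetric] mult.assoc[symmetric] flip: fps_const_neg)

lemma fps_deriv_eq_self_plus_unique:
  fixes f h g :: "'a :: field_char_0 fps"
  assumes "fps_deriv f = f + g" "fps_deriv h = h + g" "f $ 0 = h $ 0"
  shows "f = h"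
proof -
  have "(f - h) $ n = 0" for n
  proof (induction n)
    case (Suc n)
    have "fps_deriv (f - h) $ n = (f - h) $ n"
      using assms(1,2) by simp
    then have "of_nat (Suc n) * (f - h) $ Suc n = 0"
      using Suc by simp
    then show ?case
      by (simp del: of_nat_Suc)
  qed (use assms(3) in simp)
  then show ?thesis
    by (metis fps_ext fps_zero_nth right_minus_eq)
qed

section \<open>Degree and sign of a fixed coefficient\<close>

definition top_sign_nonneg :: "nat \<Rightarrow> 'a :: linordered_field \<Rightarrow> 'a poly \<Rightarrow> bool" where
  "top_sign_nonneg d s p \<longleftrightarrow> degree p \<le> d \<and> 0 \<le> s * coeff p d"

definition top_sign_pos :: "nat \<Rightarrow> 'a :: linordered_field \<Rightarrow> 'a poly \<Rightarrow> bool" where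
  "top_sign_pos d s p \<longleftrightarrow> degree p \<le> d \<and> 0 < s * coeff p d"

lemma top_sign_pos_imp_nonneg: "top_sign_pos d s p \<Longrightarrow> top_sign_nonneg d s p"
  by (auto simp: top_sign_pos_def top_sign_nonneg_def)

lemma top_sign_pos_degree: "top_sign_pos d s p \<Longrightarrow> degree p = d"
  unfolding top_sign_pos_def by (metis le_antisym le_degree mult_zero_right order_less_irrefl)

lemma top_sign_pos_lead_coeff: "top_sign_pos d s p \<Longrightarrow> 0 < s * lead_coeff p"
  using top_sign_pos_degree[of d s p] by (auto simp: top_sign_pos_def)

lemma top_sign_pos_smult_iff: "top_sign_pos d s (smult c p) \<longleftrightarrow> top_sign_pos d (s * c) p"
  by (cases "c = 0") (auto simp: top_sign_pos_def mult.assoc)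

lemma top_sign_nonneg_0 [simp]: "top_sign_nonneg d s 0"
  by (simp add: top_sign_nonneg_def)

lemma top_sign_nonneg_of_degree_less: "degree p < d \<Longrightarrow> top_sign_nonneg d s p"
  by (simp add: top_sign_nonneg_def coeff_eq_0)

lemma top_sign_nonneg_add:
  "top_sign_nonneg d s p \<Longrightarrow> top_sign_nonneg d s q \<Longrightarrow> top_sign_nonneg d s (p + q)"
  by (auto simp: top_sign_nonneg_def degree_add_le distrib_left)

lemma top_sign_pos_add:
  "top_sign_pos d s p \<Longrightarrow> top_sign_nonneg d s q \<Longrightarrow> top_sign_pos d s (p + q)"
  by (auto simp: top_sign_nonneg_def top_sign_pos_def degree_add_le distrib_left)

lemma top_sign_nonneg_sum:
  "(\<And>x. x \<in> A \<Longrightarrow> top_sign_nonneg d s (f x)) \<Longrightarrow> top_sign_nonneg d s (sum f A)"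
  by (induction A rule: infinite_finite_induct) (simp_all add: top_sign_nonneg_add)

lemma top_sign_pos_sum:
  assumes "finite A" "a \<in> A" "top_sign_pos d s (f a)" "\<And>x. x \<in> A \<Longrightarrow> top_sign_nonneg d s (f x)"
  shows "top_sign_pos d s (sum f A)"
proof -
  have "top_sign_nonneg d s (sum f (A - {a}))"
    using assms(4) by (intro top_sign_nonneg_sum) auto
  then show ?thesis
    using assms(1-3) top_sign_pos_add by (simp add: sum.remove)
qed

lemma top_sign_nonneg_mult:
  assumes "top_sign_nonneg d1 s1 p" "top_sign_nonneg d2 s2 q"
  shows "top_sign_nonneg (d1 + d2) (s1 * s2) (p * q)"
proof -
  have "s1 * s2 * coeff (p * q) (d1 + d2) = (s1 * coeff p d1) * (s2 * coeff q d2)"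
    using assms by (simp add: top_sign_nonneg_def coeff_mult_degree_le_sum algebra_simps)
  also have "\<dots> \<ge> 0"
    using assms by (simp add: top_sign_nonneg_def)
  finally show ?thesis
    using assms degree_mult_le[of p q] by (auto simp: top_sign_nonneg_def)
qed

lemma top_sign_pos_mult:
  assumes "top_sign_pos d1 s1 p" "top_sign_pos d2 s2 q"
  shows "top_sign_pos (d1 + d2) (s1 * s2) (p * q)"
proof -
  have "s1 * s2 * coeff (p * q) (d1 + d2) = (s1 * coeff p d1) * (s2 * coeff q d2)"
    using assms by (simp add: top_sign_pos_def coeff_mult_degree_le_sum algebra_simps)
  also have "\<dots> > 0"
    using assms by (simp add: top_sign_pos_def)
  finally show ?thesis
    using assms degree_mult_le[of p q] by (auto simp: top_sign_pos_def)
qed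

lemma top_sign_nonneg_pderiv_plus_smult:
  "top_sign_nonneg d s p \<Longrightarrow> 0 \<le> c \<Longrightarrow> top_sign_nonneg d s (pderiv p + smult c p)"
  unfolding top_sign_nonneg_def
  by (auto simp: degree_pderiv_plus_smult_le coeff_pderiv_eq_0_of_degree_le mult.left_commute)

lemma top_sign_pos_pderiv_plus_smult:
  "top_sign_pos d s p \<Longrightarrow> 0 < c \<Longrightarrow> top_sign_pos d s (pderiv p + smult c p)"
  unfolding top_sign_pos_def
  by (auto simp: degree_pderiv_plus_smult_le coeff_pderiv_eq_0_of_degree_le mult.left_commute)

lemma top_sign_pos_of_pderiv_plus_smult_eq:
  assumes "top_sign_pos d s r" "0 < c" "pderiv q + smult c q = r"
    and "degree q \<le> degree r" "coeff q (degree r) = lead_coeff r / c"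
  shows "top_sign_pos d s q"
  using assms top_sign_pos_degree[OF assms(1)] top_sign_pos_lead_coeff[OF assms(1)]
  by (simp add: top_sign_pos_def)

lemma top_sign_pos_of_pderiv_eq:
  assumes "top_sign_pos d s r" "pderiv q = r"
    and "degree q \<le> Suc (degree r)" "coeff q (Suc (degree r)) = lead_coeff r / of_nat (Suc (degree r))"
  shows "top_sign_pos (Suc d) s q"
  using assms top_sign_pos_degree[OF assms(1)] top_sign_pos_lead_coeff[OF assms(1)]
  by (simp add: top_sign_pos_def del: of_nat_Suc)

lemma top_sign_pos_diff_const: "0 < d \<Longrightarrow> top_sign_pos d s p \<Longrightarrow> top_sign_pos d s (p - [:c:])"
  unfolding top_sign_pos_def by (cases d) (auto intro: degree_diff_le)

section \<open>The shape of \<open>\<alpha>\<^sub>a\<close>\<close>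

definition alpha_lead :: "nat \<Rightarrow> rat" where
  "alpha_lead a = (of_nat a + 1)^(a - 1) / fact a"

lemma alpha_lead_eq: "alpha_lead k = of_nat (k + 1)^k / fact (k + 1)"
proof (cases k)
  case (Suc n)
  have "(of_nat (k + 1) :: rat)^k / fact (k + 1) = (of_nat (k + 1) * of_nat (n + 2)^n) / (of_nat (k + 1) * fact k)"
    using Suc by (simp only: fact_Suc power_Suc) simp
  also have "\<dots> = alpha_lead k"
    using Suc by (simp add: alpha_lead_def del: of_nat_Suc) (simp add: add.commute)
  finally show ?thesis ..
qed (simp add: alpha_lead_def)

lemma alpha_lead_Suc:
  "of_nat (Suc k) * alpha_lead (Suc k) = (\<Sum>a\<le>k. alpha_lead a * (of_nat (Suc (k - a)) * alpha_lead (k - a)))"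
proof -
  have "alpha_lead a * (of_nat (Suc (k - a)) * alpha_lead (k - a)) =
      of_nat (k choose a) * (of_nat a + 1)^(a - 1) * (of_nat (k - a) + 1)^(k - a) / fact k"
    if "a \<le> k" for a
  proof -
    have "of_nat (Suc (k - a)) * (of_nat (k - a) + 1 :: rat)^(k - a - 1) = (of_nat (k - a) + 1)^(k - a)"
      by (cases "k - a") simp_all
    moreover have "(of_nat (k choose a) :: rat) = fact k / (fact a * fact (k - a))"
      using that by (rule binomial_fact)
    ultimately show ?thesis
      by (simp add: alpha_lead_def field_simps)
  qed
  then have "(\<Sum>a\<le>k. alpha_lead a * (of_nat (Suc (k - a)) * alpha_lead (k - a))) =
      (\<Sum>a\<le>k. of_nat (k choose a) * (of_nat a + 1)^(a - 1) * (of_nat (k - a) + 1)^(k - a)) / fact k"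
    by (simp add: sum_divide_distrib)
  also have "\<dots> = (of_nat k + 2)^k / fact k"
    by (simp only: abel_identity)
  also have "\<dots> = of_nat (Suc k) * alpha_lead (Suc k)"
    by (simp add: alpha_lead_def add.commute del: of_nat_Suc) (simp add: field_simps)
  finally show ?thesis
    by simp
qed

definition alpha_shape :: "nat \<Rightarrow> rat poly poly \<Rightarrow> bool" where
  "alpha_shape a Y \<longleftrightarrow>
     (\<forall>j>Suc a. coeff Y j = 0) \<and>
     (\<forall>j\<in>{1..Suc a}. top_sign_pos (2 * (Suc a - j)) ((-1)^(Suc a - j)) (coeff Y j)) \<and>
     coeff Y (Suc a) = [:alpha_lead a:] \<and>
     coeff Y 0 = (if a = 0 then [:-1, -1:] else 0)"

lemma alpha_0_exp_poly: "alpha 0 = exp_poly_fps [:[:-1, -1:], 1:] \<and> alpha_shape 0 [:[:-1, -1:], 1:]"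
proof
  have "fps_of_poly [:-1, -1:] = - 1 - (fps_X :: rat fps)"
    by (simp add: fps_of_poly_pCons algebra_simps)
  then show "alpha 0 = exp_poly_fps [:[:-1, -1:], 1:]"
    by (simp add: exp_poly_fps_pCons alpha_0)
  show "alpha_shape 0 [:[:-1, -1:], 1:]"
    unfolding alpha_shape_def
  proof (intro conjI allI impI ballI)
    show "coeff [:[:-1, -1:], 1:] j = 0" if "Suc 0 < j" for j
      using that by (cases j; cases "j - 1") auto
    show "top_sign_pos (2 * (Suc 0 - j)) ((-1)^(Suc 0 - j)) (coeff [:[:-1, -1:], 1:] j)"
      if "j \<in> {1..Suc 0}" for j
      using that by (simp add: top_sign_pos_def)
  qed (simp_all add: alpha_lead_def)
qed

lemma alpha_shape_coeff_eq_0: "alpha_shape a Y \<Longrightarrow> Suc a < j \<Longrightarrow> coeff Y j = 0"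
  by (simp add: alpha_shape_def)

lemma alpha_shape_top_sign_pos:
  "alpha_shape a Y \<Longrightarrow> 1 \<le> j \<Longrightarrow> j \<le> Suc a \<Longrightarrow>
     top_sign_pos (2 * (Suc a - j)) ((-1)^(Suc a - j)) (coeff Y j)"
  by (simp add: alpha_shape_def)

lemma alpha_shape_coeff_top: "alpha_shape a Y \<Longrightarrow> coeff Y (Suc a) = [:alpha_lead a:]"
  by (simp add: alpha_shape_def)

lemma alpha_shape_coeff_0: "alpha_shape a Y \<Longrightarrow> coeff Y 0 = (if a = 0 then [:-1, -1:] else 0)"
  by (simp add: alpha_shape_def)

lemma alpha_shape_top_sign_nonneg:
  assumes "alpha_shape a Y" "j \<le> Suc a"
  shows "top_sign_nonneg (2 * (Suc a - j)) ((-1)^(Suc a - j)) (coeff Y j)"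
proof (cases "j = 0")
  case True
  then show ?thesis
    using alpha_shape_coeff_0[OF assms(1)] by (simp add: top_sign_nonneg_def)
next
  case False
  with assms show ?thesis
    by (intro top_sign_pos_imp_nonneg alpha_shape_top_sign_pos) auto
qed

lemma alpha_shape_deriv_top_sign_nonneg:
  assumes "alpha_shape a Y" "j \<le> Suc a"
  shows "top_sign_nonneg (2 * (Suc a - j)) ((-1)^(Suc a - j)) (coeff (exp_poly_deriv Y) j)"
  unfolding coeff_exp_poly_deriv
  by (intro top_sign_nonneg_pderiv_plus_smult alpha_shape_top_sign_nonneg assms) simp

lemma alpha_shape_deriv_top_sign_pos:
  assumes "alpha_shape a Y" "1 \<le> j" "j \<le> Suc a"
  shows "top_sign_pos (2 * (Suc a - j)) ((-1)^(Suc a - j)) (coeff (exp_poly_deriv Y) j)"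
  unfolding coeff_exp_poly_deriv
  by (intro top_sign_pos_pderiv_plus_smult alpha_shape_top_sign_pos assms) (use assms in simp)

lemma alpha_shape_deriv_coeff_eq_0: "alpha_shape a Y \<Longrightarrow> Suc a < j \<Longrightarrow> coeff (exp_poly_deriv Y) j = 0"
  by (simp add: coeff_exp_poly_deriv alpha_shape_coeff_eq_0)

lemma alpha_shape_deriv_coeff_top:
  "alpha_shape a Y \<Longrightarrow> coeff (exp_poly_deriv Y) (Suc a) = [:of_nat (Suc a) * alpha_lead a:]"
  by (simp add: coeff_exp_poly_deriv alpha_shape_coeff_top)

lemma alpha_shape_deriv_coeff_0:
  "alpha_shape a Y \<Longrightarrow> coeff (exp_poly_deriv Y) 0 = (if a = 0 then [:-1:] else 0)"
  by (simp add: coeff_exp_poly_deriv alpha_shape_coeff_0 pderiv_pCons)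

lemma alpha_shape_mult_deriv_coeff_eq_0:
  assumes Y: "alpha_shape a Y" and Z: "alpha_shape b Z" and j: "a + b + 2 < j"
  shows "coeff (Y * exp_poly_deriv Z) j = 0"
  unfolding coeff_mult
proof (intro sum.neutral ballI)
  fix i assume "i \<in> {..j}"
  show "coeff Y i * coeff (exp_poly_deriv Z) (j - i) = 0"
  proof (cases "i \<le> Suc a")
    case True
    then show ?thesis
      using j alpha_shape_deriv_coeff_eq_0[OF Z, of "j - i"] by simp
  qed (simp add: alpha_shape_coeff_eq_0[OF Y])
qed

lemma alpha_shape_mult_deriv_summand_top_sign_nonneg:
  assumes Y: "alpha_shape a Y" and Z: "alpha_shape b Z" and j: "j \<le> a + b + 2" and i: "i \<le> j"
  shows "top_sign_nonneg (2 * (a + b + 2 - j)) ((-1)^(a + b + 2 - j))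
           (coeff Y i * coeff (exp_poly_deriv Z) (j - i))"
proof (cases "i \<le> Suc a \<and> j - i \<le> Suc b")
  case True
  have e: "Suc a - i + (Suc b - (j - i)) = a + b + 2 - j"
    using True i by auto
  have "top_sign_nonneg (2 * (Suc a - i) + 2 * (Suc b - (j - i))) ((-1)^(Suc a - i) * (-1)^(Suc b - (j - i)))
      (coeff Y i * coeff (exp_poly_deriv Z) (j - i))"
    using True
    by (intro top_sign_nonneg_mult alpha_shape_top_sign_nonneg[OF Y] alpha_shape_deriv_top_sign_nonneg[OF Z])
      simp_all
  then show ?thesis
    by (simp only: e add_mult_distrib2[symmetric] power_add[symmetric])
next
  case False
  have "coeff Y i = 0 \<or> coeff (exp_poly_deriv Z) (j - i) = 0"
  proof (cases "i \<le> Suc a")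
    case True
    with False have "Suc b < j - i"
      by simp
    then show ?thesis
      by (simp add: alpha_shape_deriv_coeff_eq_0[OF Z])
  qed (simp add: alpha_shape_coeff_eq_0[OF Y])
  then show ?thesis
    by auto
qed

lemma alpha_shape_mult_deriv_top_sign_nonneg:
  assumes "alpha_shape a Y" "alpha_shape b Z" "j \<le> a + b + 2"
  shows "top_sign_nonneg (2 * (a + b + 2 - j)) ((-1)^(a + b + 2 - j)) (coeff (Y * exp_poly_deriv Z) j)"
  unfolding coeff_mult
  by (intro top_sign_nonneg_sum alpha_shape_mult_deriv_summand_top_sign_nonneg assms) simp

text \<open>The summand i = 1 attains the degree bound because the coefficient of e^z in
  alpha_0 is the constant 1.\<close>

lemma alpha_shape_0_mult_deriv_top_sign_pos:
  assumes Y: "alpha_shape 0 Y" and Z: "alpha_shape b Z" and j: "2 \<le> j" "j \<le> b + 2"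
  shows "top_sign_pos (2 * (b + 2 - j)) ((-1)^(b + 2 - j)) (coeff (Y * exp_poly_deriv Z) j)"
  unfolding coeff_mult
proof (rule top_sign_pos_sum[where a = 1])
  have e: "Suc b - (j - 1) = b + 2 - j"
    using j by simp
  show "top_sign_pos (2 * (b + 2 - j)) ((-1)^(b + 2 - j)) (coeff Y 1 * coeff (exp_poly_deriv Z) (j - 1))"
    using top_sign_pos_mult[OF alpha_shape_top_sign_pos[OF Y, of 1]
        alpha_shape_deriv_top_sign_pos[OF Z, of "j - 1"]] j
    by (simp add: e)
  show "top_sign_nonneg (2 * (b + 2 - j)) ((-1)^(b + 2 - j)) (coeff Y i * coeff (exp_poly_deriv Z) (j - i))"
    if "i \<in> {..j}" for i
    using alpha_shape_mult_deriv_summand_top_sign_nonneg[OF Y Z, of j i] that j by simp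
qed (use j in simp_all)

lemma alpha_shape_mult_deriv_coeff_top:
  assumes Y: "alpha_shape a Y" and Z: "alpha_shape b Z"
  shows "coeff (Y * exp_poly_deriv Z) (a + b + 2) = [:alpha_lead a * (of_nat (Suc b) * alpha_lead b):]"
proof -
  have "coeff (Y * exp_poly_deriv Z) (a + b + 2) =
      (\<Sum>i\<le>a + b + 2. if i = Suc a then coeff Y (Suc a) * coeff (exp_poly_deriv Z) (Suc b) else 0)"
    unfolding coeff_mult
  proof (intro sum.cong refl)
    fix i
    consider "i < Suc a" | "i = Suc a" | "Suc a < i"
      by linarith
    then show "coeff Y i * coeff (exp_poly_deriv Z) (a + b + 2 - i) =
        (if i = Suc a then coeff Y (Suc a) * coeff (exp_poly_deriv Z) (Suc b) else 0)"
      by cases (simp_all add: alpha_shape_coeff_eq_0[OF Y] alpha_shape_deriv_coeff_eq_0[OF Z])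
  qed
  also have "\<dots> = coeff Y (Suc a) * coeff (exp_poly_deriv Z) (Suc b)"
    by simp
  also have "\<dots> = [:alpha_lead a * (of_nat (Suc b) * alpha_lead b):]"
    by (simp only: alpha_shape_coeff_top[OF Y] alpha_shape_deriv_coeff_top[OF Z]) simp
  finally show ?thesis .
qed

definition alpha_rhs :: "(nat \<Rightarrow> rat poly poly) \<Rightarrow> nat \<Rightarrow> rat poly poly" where
  "alpha_rhs Y k = Y k + (\<Sum>a\<le>k. Y a * exp_poly_deriv (Y (k - a)))"

text \<open>The shape of the right-hand side R in alpha_k' = alpha_k + R: the coefficient of
  e^((k+1-m)z) in R is (-1)^m f_m in the notation of the theorem.\<close>

definition rhs_shape :: "nat \<Rightarrow> rat poly poly \<Rightarrow> bool" where
  "rhs_shape k R \<longleftrightarrow>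
     coeff R 0 = 0 \<and>
     (\<forall>j>Suc k. coeff R j = 0) \<and>
     (\<forall>j\<in>{2..Suc k}. top_sign_pos (2 * (Suc k - j)) ((-1)^(Suc k - j)) (coeff R j)) \<and>
     top_sign_pos (2 * k - 1) ((-1)^k) (coeff R 1) \<and>
     coeff R (Suc k) = [:of_nat k * alpha_lead k:]"

lemma rhs_shape_degree: "rhs_shape k R \<Longrightarrow> degree R \<le> Suc k"
  by (rule degree_le) (simp add: rhs_shape_def)

lemma rhs_shape_coeff_top_sign_pos:
  assumes "rhs_shape k R" "1 \<le> m" "m < k"
  shows "top_sign_pos (2 * m) ((-1)^m) (coeff R (k + 1 - m))"
proof -
  have "k + 1 - m \<in> {2..Suc k}" "Suc k - (k + 1 - m) = m"
    using assms(2,3) by auto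
  then show ?thesis
    using assms(1) unfolding rhs_shape_def by metis
qed

lemma fps_deriv_alpha_Suc_eq_alpha_rhs:
  assumes "\<And>a. a \<le> k \<Longrightarrow> alpha a = exp_poly_fps (Y a)"
  shows "fps_deriv (alpha (Suc k)) = alpha (Suc k) + exp_poly_fps (alpha_rhs Y k)"
  using assms
  by (simp add: fps_deriv_alpha_Suc alpha_rhs_def exp_poly_fps_add exp_poly_fps_sum exp_poly_fps_mult
      flip: fps_deriv_exp_poly_fps)

context
  fixes Y :: "nat \<Rightarrow> rat poly poly" and k :: nat
  assumes shape: "\<And>a. a \<le> k \<Longrightarrow> alpha_shape a (Y a)"
begin

lemma coeff_alpha_rhs:
  "coeff (alpha_rhs Y k) j = coeff (Y k) j + (\<Sum>a\<le>k. coeff (Y a * exp_poly_deriv (Y (k - a))) j)"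
  by (simp add: alpha_rhs_def coeff_sum)

lemma alpha_rhs_coeff_eq_0: "k + 2 < j \<Longrightarrow> coeff (alpha_rhs Y k) j = 0"
  using alpha_shape_coeff_eq_0[OF shape] alpha_shape_mult_deriv_coeff_eq_0[OF shape shape]
  by (simp add: coeff_alpha_rhs)

lemma alpha_rhs_top_sign_pos:
  assumes j: "2 \<le> j" "j \<le> k + 2"
  shows "top_sign_pos (2 * (k + 2 - j)) ((-1)^(k + 2 - j)) (coeff (alpha_rhs Y k) j)"
proof -
  have products: "top_sign_pos (2 * (k + 2 - j)) ((-1)^(k + 2 - j))
      (\<Sum>a\<le>k. coeff (Y a * exp_poly_deriv (Y (k - a))) j)"
  proof (rule top_sign_pos_sum[where a = 0])
    show "top_sign_pos (2 * (k + 2 - j)) ((-1)^(k + 2 - j)) (coeff (Y 0 * exp_poly_deriv (Y (k - 0))) j)"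
      using alpha_shape_0_mult_deriv_top_sign_pos[OF shape shape j] by simp
    show "top_sign_nonneg (2 * (k + 2 - j)) ((-1)^(k + 2 - j)) (coeff (Y a * exp_poly_deriv (Y (k - a))) j)"
      if "a \<in> {..k}" for a
      using alpha_shape_mult_deriv_top_sign_nonneg[OF shape shape, of a "k - a" j] that j by simp
  qed simp_all
  have own: "top_sign_nonneg (2 * (k + 2 - j)) ((-1)^(k + 2 - j)) (coeff (Y k) j)"
  proof (cases "j = k + 2")
    case True
    then show ?thesis
      by (simp add: alpha_shape_coeff_eq_0[OF shape])
  next
    case False
    then have "degree (coeff (Y k) j) \<le> 2 * (Suc k - j)"
      using j alpha_shape_top_sign_pos[OF shape, of k j] by (simp add: top_sign_pos_def)
    also have "\<dots> < 2 * (k + 2 - j)"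
      using False j by simp
    finally show ?thesis
      by (rule top_sign_nonneg_of_degree_less)
  qed
  show ?thesis
    unfolding coeff_alpha_rhs using top_sign_pos_add[OF products own] by (simp add: add.commute)
qed

lemma alpha_rhs_coeff_top:
  "coeff (alpha_rhs Y k) (k + 2) = [:of_nat (Suc k) * alpha_lead (Suc k):]"
proof -
  have "coeff (Y a * exp_poly_deriv (Y (k - a))) (k + 2) =
      [:alpha_lead a * (of_nat (Suc (k - a)) * alpha_lead (k - a)):]" if "a \<in> {..k}" for a
  proof -
    have "a + (k - a) + 2 = k + 2"
      using that by simp
    then show ?thesis
      using alpha_shape_mult_deriv_coeff_top[OF shape shape, of a "k - a"] that by simp
  qed
  then have "(\<Sum>a\<le>k. coeff (Y a * exp_poly_deriv (Y (k - a))) (k + 2)) =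
      (\<Sum>a\<le>k. [:alpha_lead a * (of_nat (Suc (k - a)) * alpha_lead (k - a)):])"
    by (rule sum.cong[OF refl])
  also have "\<dots> = [:of_nat (Suc k) * alpha_lead (Suc k):]"
    by (simp only: sum_to_poly alpha_lead_Suc)
  finally have products: "(\<Sum>a\<le>k. coeff (Y a * exp_poly_deriv (Y (k - a))) (k + 2)) =
      [:of_nat (Suc k) * alpha_lead (Suc k):]" .
  have "coeff (Y k) (k + 2) = 0"
    by (simp add: alpha_shape_coeff_eq_0[OF shape])
  then show ?thesis
    by (simp only: coeff_alpha_rhs products add_0)
qed

lemma alpha_rhs_coeff_0: "coeff (alpha_rhs Y k) 0 = 0"
proof -
  have "coeff (Y a * exp_poly_deriv (Y (k - a))) 0 = (if a = 0 \<and> k = 0 then [:1, 1:] else 0)"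
    if "a \<le> k" for a
    using alpha_shape_coeff_0[OF shape[OF that]] alpha_shape_deriv_coeff_0[OF shape, of "k - a"] that
    by (auto simp: coeff_mult)
  then show ?thesis
    using alpha_shape_coeff_0[OF shape[of k]] by (simp add: coeff_alpha_rhs)
qed

lemma alpha_rhs_coeff_1:
  "coeff (alpha_rhs Y k) 1 = [:-1, -1:] * (pderiv (coeff (Y k) 1) + coeff (Y k) 1)"
proof -
  have "coeff (Y a * exp_poly_deriv (Y (k - a))) 1 =
      (if a = 0 then [:-1, -1:] * coeff (exp_poly_deriv (Y k)) 1 else 0) +
      (if a = k then - coeff (Y k) 1 else 0)" if "a \<le> k" for a
    using alpha_shape_coeff_0[OF shape[OF that]] alpha_shape_deriv_coeff_0[OF shape, of "k - a"] that
    by (auto simp: coeff_mult)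
  then show ?thesis
    by (simp add: coeff_alpha_rhs sum.distrib coeff_exp_poly_deriv algebra_simps)
qed

lemma alpha_rhs_shape: "rhs_shape (Suc k) (alpha_rhs Y k)"
proof -
  have "top_sign_pos 1 (-1) [:-1, -1 :: rat:]"
    by (simp add: top_sign_pos_def)
  moreover have "top_sign_pos (2 * k) ((-1)^k) (pderiv (coeff (Y k) 1) + smult 1 (coeff (Y k) 1))"
    using alpha_shape_top_sign_pos[OF shape, of k 1] by (intro top_sign_pos_pderiv_plus_smult) simp_all
  ultimately have "top_sign_pos (1 + 2 * k) (-1 * (-1)^k)
      ([:-1, -1:] * (pderiv (coeff (Y k) 1) + smult 1 (coeff (Y k) 1)))"
    by (rule top_sign_pos_mult)
  then have "top_sign_pos (2 * Suc k - 1) ((-1)^Suc k) (coeff (alpha_rhs Y k) 1)"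
    unfolding alpha_rhs_coeff_1 by (simp add: add.commute)
  then show ?thesis
    using alpha_rhs_coeff_0 alpha_rhs_coeff_eq_0 alpha_rhs_top_sign_pos alpha_rhs_coeff_top
    by (auto simp: rhs_shape_def)
qed

end

section \<open>Solving for \<open>\<alpha>\<^sub>k\<close>\<close>

lemma exists_rhs_coeff_solution:
  assumes R: "rhs_shape (Suc k) R" and j: "1 \<le> j" "j \<le> k + 2"
  shows "\<exists>q. pderiv q + smult (of_nat j - 1) q = coeff R j \<and>
             top_sign_pos (2 * (k + 2 - j)) ((-1)^(k + 2 - j)) q"
proof (cases "j = 1")
  case True
  obtain q where "pderiv q = coeff R 1" "degree q \<le> Suc (degree (coeff R 1))"
    "coeff q (Suc (degree (coeff R 1))) = lead_coeff (coeff R 1) / of_nat (Suc (degree (coeff R 1)))"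
    using exists_pderiv_eq by blast
  moreover have "top_sign_pos (2 * k + 1) ((-1)^Suc k) (coeff R 1)"
    using R by (simp add: rhs_shape_def)
  ultimately have "top_sign_pos (Suc (2 * k + 1)) ((-1)^Suc k) q"
    by (intro top_sign_pos_of_pderiv_eq)
  then show ?thesis
    using \<open>pderiv q = coeff R 1\<close> True by (intro exI[of _ q]) simp
next
  case False
  then have c: "(0 :: rat) < of_nat j - 1"
    using j by simp
  obtain q where q: "pderiv q + smult (of_nat j - 1) q = coeff R j" "degree q \<le> degree (coeff R j)"
    "coeff q (degree (coeff R j)) = lead_coeff (coeff R j) / (of_nat j - 1)"
    using exists_pderiv_plus_smult_eq[of "of_nat j - 1"] c by fastforce
  have "top_sign_pos (2 * (k + 2 - j)) ((-1)^(k + 2 - j)) (coeff R j)"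
    using R False j by (simp add: rhs_shape_def)
  with q c show ?thesis
    by (blast intro: top_sign_pos_of_pderiv_plus_smult_eq)
qed

lemma constant_solution_eq:
  assumes "pderiv q + smult (of_nat (k + 2) - 1) q = [:of_nat (Suc k) * L:]" "top_sign_pos 0 s q"
  shows "q = [:L:]"
proof -
  obtain q0 where "q = [:q0:]"
    using top_sign_pos_degree[OF assms(2)] by (metis degree_eq_zeroE)
  with assms(1) have "of_nat (Suc k) * (q0 - L) = 0"
    by (simp add: algebra_simps)
  with \<open>q = [:q0:]\<close> show ?thesis
    by (simp del: of_nat_Suc)
qed

context
  fixes R :: "rat poly poly" and k :: nat and g :: "nat \<Rightarrow> rat poly"
  assumes R: "rhs_shape (Suc k) R"
    and g: "\<And>j. j \<in> {1..k + 2} \<Longrightarrow> pderiv (g j) + smult (of_nat j - 1) (g j) = coeff R j \<and>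
              top_sign_pos (2 * (k + 2 - j)) ((-1)^(k + 2 - j)) (g j)"
begin

lemma exp_poly_deriv_from_rhs_coeffs:
  "exp_poly_deriv (exp_poly_from_coeffs g (k + 2)) = exp_poly_from_coeffs g (k + 2) + R"
  unfolding exp_poly_deriv_eq_self_plus_iff
proof
  fix j
  have R0: "coeff R 0 = 0" and R_high: "k + 2 < j \<Longrightarrow> coeff R j = 0"
    using R by (simp_all add: rhs_shape_def)
  consider "j = 0" | "j = 1" | "j \<in> {2..k + 2}" | "k + 2 < j"
    by fastforce
  then show "pderiv (coeff (exp_poly_from_coeffs g (k + 2)) j) +
      smult (of_nat j - 1) (coeff (exp_poly_from_coeffs g (k + 2)) j) = coeff R j"
  proof cases
    case 2
    then show ?thesis
      using g[of 1] unfolding coeff_exp_poly_from_coeffs by (simp add: pderiv_diff)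
  next
    case 3
    then show ?thesis
      using g[of j] by (simp add: coeff_exp_poly_from_coeffs)
  qed (simp_all add: coeff_exp_poly_from_coeffs R0 R_high)
qed

lemma alpha_shape_from_rhs_coeffs: "alpha_shape (Suc k) (exp_poly_from_coeffs g (k + 2))"
  unfolding alpha_shape_def
proof (intro conjI allI impI ballI)
  fix j assume j: "j \<in> {1..Suc (Suc k)}"
  show "top_sign_pos (2 * (Suc (Suc k) - j)) ((-1)^(Suc (Suc k) - j)) (coeff (exp_poly_from_coeffs g (k + 2)) j)"
  proof (cases "j = 1")
    case True
    have "top_sign_pos (2 * Suc k) ((-1)^Suc k) (g 1)"
      using g[of 1] by simp
    then have "top_sign_pos (2 * Suc k) ((-1)^Suc k) (g 1 - [:\<Sum>i=1..k + 2. coeff (g i) 0:])"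
      by (rule top_sign_pos_diff_const[rotated]) simp
    then show ?thesis
      using True unfolding coeff_exp_poly_from_coeffs by simp
  next
    case False
    then show ?thesis
      using g[of j] j by (simp add: coeff_exp_poly_from_coeffs)
  qed
next
  have top: "k + 2 \<in> {1..k + 2}"
    by simp
  have R_top: "coeff R (k + 2) = [:of_nat (Suc k) * alpha_lead (Suc k):]"
    using R by (simp add: rhs_shape_def)
  have "top_sign_pos 0 1 (g (k + 2))"
    using conjunct2[OF g[OF top]] by simp
  then have "g (k + 2) = [:alpha_lead (Suc k):]"
    by (rule constant_solution_eq[OF conjunct1[OF g[OF top], unfolded R_top]])
  then show "coeff (exp_poly_from_coeffs g (k + 2)) (Suc (Suc k)) = [:alpha_lead (Suc k):]"
    by (simp add: coeff_exp_poly_from_coeffs)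
qed (simp_all add: coeff_exp_poly_from_coeffs)

end

lemma exists_alpha_shape_solution:
  assumes R: "rhs_shape (Suc k) R"
  shows "\<exists>Y. exp_poly_deriv Y = Y + R \<and> exp_poly_fps Y $ 0 = 0 \<and> alpha_shape (Suc k) Y"
proof -
  have "\<forall>j\<in>{1..k + 2}. \<exists>q. pderiv q + smult (of_nat j - 1) q = coeff R j \<and>
      top_sign_pos (2 * (k + 2 - j)) ((-1)^(k + 2 - j)) q"
    using exists_rhs_coeff_solution[OF R] by simp
  then obtain g where g: "\<And>j. j \<in> {1..k + 2} \<Longrightarrow> pderiv (g j) + smult (of_nat j - 1) (g j) = coeff R j \<and>
      top_sign_pos (2 * (k + 2 - j)) ((-1)^(k + 2 - j)) (g j)"
    by (metis bchoice)
  then show ?thesis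
    using exp_poly_deriv_from_rhs_coeffs[OF R g] alpha_shape_from_rhs_coeffs[OF R g]
      exp_poly_fps_from_coeffs_nth_0 by blast
qed

lemma alpha_deriv_exists_rhs:
  assumes "\<forall>a\<le>k. \<exists>Y. alpha a = exp_poly_fps Y \<and> alpha_shape a Y"
  shows "\<exists>R. rhs_shape (Suc k) R \<and> fps_deriv (alpha (Suc k)) = alpha (Suc k) + exp_poly_fps R"
proof -
  have "\<forall>a. \<exists>Y. a \<le> k \<longrightarrow> alpha a = exp_poly_fps Y \<and> alpha_shape a Y"
    using assms by blast
  then obtain Y where Y: "\<forall>a. a \<le> k \<longrightarrow> alpha a = exp_poly_fps (Y a) \<and> alpha_shape a (Y a)"
    by (rule choice[THEN exE])
  then have "rhs_shape (Suc k) (alpha_rhs Y k)"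
    and "fps_deriv (alpha (Suc k)) = alpha (Suc k) + exp_poly_fps (alpha_rhs Y k)"
    by (simp_all add: alpha_rhs_shape fps_deriv_alpha_Suc_eq_alpha_rhs)
  then show ?thesis
    by blast
qed

lemma alpha_exp_poly: "\<forall>a\<le>k. \<exists>Y. alpha a = exp_poly_fps Y \<and> alpha_shape a Y"
proof (induction k)
  case 0
  then show ?case
    using alpha_0_exp_poly by blast
next
  case (Suc k)
  obtain R where R: "rhs_shape (Suc k) R" "fps_deriv (alpha (Suc k)) = alpha (Suc k) + exp_poly_fps R"
    using alpha_deriv_exists_rhs[OF Suc.IH] by blast
  obtain Y where Y: "exp_poly_deriv Y = Y + R" "exp_poly_fps Y $ 0 = 0" "alpha_shape (Suc k) Y"
    using exists_alpha_shape_solution[OF R(1)] by blast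
  have "alpha (Suc k) = exp_poly_fps Y"
  proof (rule fps_deriv_eq_self_plus_unique[OF R(2)])
    show "fps_deriv (exp_poly_fps Y) = exp_poly_fps Y + exp_poly_fps R"
      by (simp only: fps_deriv_exp_poly_fps Y(1) exp_poly_fps_add)
    show "alpha (Suc k) $ 0 = exp_poly_fps Y $ 0"
      by (simp add: alpha_nth Y(2))
  qed
  then show ?case
    using Suc.IH Y(3) by (auto simp: le_Suc_eq)
qed

theorem lemma4p2:
  fixes k :: nat
  assumes "k \<ge> 1"
  shows "\<exists>f :: nat \<Rightarrow> rat poly.
           (\<forall>m\<in>{1..k-1}. degree (f m) = 2 * m \<and> lead_coeff (f m) > 0) \<and>
           degree (f k) = 2 * k - 1 \<and> lead_coeff (f k) > 0 \<and>
           fps_deriv (alpha k) =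
             alpha k
             + fps_const (of_nat k * of_nat (k + 1) ^ k / fact (k + 1)) * fps_exp (of_nat (k + 1))
             + fps_exp 1 * (\<Sum>m=1..k. (-1) ^ m * fps_of_poly (f m) * fps_exp (of_nat (k - m)))"
proof -
  obtain R where R: "rhs_shape k R" and ode: "fps_deriv (alpha k) = alpha k + exp_poly_fps R"
    using alpha_deriv_exists_rhs[OF alpha_exp_poly, of "k - 1"] assms by auto
  define f where "f m = smult ((-1)^m) (coeff R (k + 1 - m))" for m
  have mid: "top_sign_pos (2 * m) 1 (f m)" if "m \<in> {1..k - 1}" for m
    using rhs_shape_coeff_top_sign_pos[OF R, of m] that assms by (auto simp: f_def top_sign_pos_smult_iff)
  have last: "top_sign_pos (2 * k - 1) 1 (f k)"
    using R by (simp add: f_def top_sign_pos_smult_iff rhs_shape_def)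
  have expand: "exp_poly_fps R =
      fps_const (of_nat k * of_nat (k + 1) ^ k / fact (k + 1)) * fps_exp (of_nat (k + 1)) +
      fps_exp 1 * (\<Sum>m=1..k. (-1) ^ m * fps_of_poly (f m) * fps_exp (of_nat (k - m)))"
    using R exp_poly_fps_expand[OF _ rhs_shape_degree[OF R]]
    by (simp add: rhs_shape_def f_def minus_one_power_mult_fps_of_poly_smult alpha_lead_eq
        fps_of_poly_const)
  show ?thesis
  proof (intro exI[of _ f] conjI ballI)
    fix m assume "m \<in> {1..k - 1}"
    then show "degree (f m) = 2 * m" "lead_coeff (f m) > 0"
      using top_sign_pos_degree[OF mid] top_sign_pos_lead_coeff[OF mid] by simp_all
  next
    show "degree (f k) = 2 * k - 1" "lead_coeff (f k) > 0"
      using top_sign_pos_degree[OF last] top_sign_pos_lead_coeff[OF last] by simp_all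
  qed (simp only: ode expand add.assoc)
qed

end
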